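(* Let $G=(V,E,\{w_j\})$ be a reduced instance of the line highway problem with $[s,\ell]$-valuation (with $s\ge 1$), and let $r=s/\ell$. Let $\boldsymbol{\sigma}$ be the (random) price vector output by the algorithm Line_Random described in the context. Then \[ \frac{\mathrm{Opt}_{\rm coup}(G)}{\mathbf{E}[\mathrm{Profit}_{\rm coup}(\boldsymbol{\sigma})]}\le \begin{cases} 3/r & 0<r\le 1/2,\\ 6 & 1/2<r\le 1,\end{cases} \] where the expectation is over the random choices of the algorithm.
   Context: For integers $a\le b$, $[a,b]=\{a,a+1,\dots,b\}$. A reduced instance of the line highway problem is $G=(V,E,\{w_j\})$ with $V=[1,n]$ (items) and a finite multiset $E=\{e_1,\dots,e_m\}$ of customers, each $e_j=[j_s,j_t]$ with $1\le j_s\le j_t\le n$, having valuation (weight) $w_j>0$; valuations are integers. It has $[s,\ell]$-valuation if $s=\min_j w_j$ and $\ell=\max_j w_j$. For a price vector $\mathbf p=(p_1,\dots,p_n)\in\mathbb R^n$ (prices may be negative), let $p(e_j)=\sum_{i\in e_j}p_i$. The coupon-model profit is $\mathrm{Profit}_{\rm coup}(\mathbf p)=\sum_{j:\,w_j\ge p(e_j)}\max\{p(e_j),0\}$, and $\mathrm{Opt}_{\rm coup}(G)=\max_{\mathbf p}\mathrm{Profit}_{\rm coup}(\mathbf p)$. The DAG representation of $G$ has vertices $u_0,u_1,\dots,u_n$ and, for each $e_j=[j_s,j_t]$, an arc $u_{j_s-1}\to u_{j_t}$ of weight $w_j$; a partial-sum vector $(s_0,\dots,s_n)$ on these vertices determines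 the price vector $p_i=s_i-s_{i-1}$, $i\in[1,n]$. Algorithm Line_Random: construct the DAG representation; for each $u_i$ independently choose a partial sum $s_i$ uniformly at random from the integers $\{0,1,\dots,\ell\}$; output $\sigma_i=s_i-s_{i-1}$ for $i\in[1,n]$. *)

theory Defs
  imports "HOL-Probability.Probability"
begin

(* A customer is a triple (j_s, j_t, w_j): the interval [j_s, j_t] of items and its integer valuation. *)
type_synonym customer = "nat \<times> nat \<times> int"

definition cstart :: "customer \<Rightarrow> nat" where "cstart c = fst c"
definition cend :: "customer \<Rightarrow> nat" where "cend c = fst (snd c)"
definition cweight :: "customer \<Rightarrow> int" where "cweight c = snd (snd c)"

(* reduced instance on items V = [1,n], customers given as a list (a finite multiset) *)
definition reduced_instance :: "nat \<Rightarrow> customer list \<Rightarrow> bool" where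
  "reduced_instance n E \<longleftrightarrow>
     (\<forall>c\<in>set E. 1 \<le> cstart c \<and> cstart c \<le> cend c \<and> cend c \<le> n \<and> cweight c > 0)"

definition has_valuation :: "customer list \<Rightarrow> int \<Rightarrow> int \<Rightarrow> bool" where
  "has_valuation E s l \<longleftrightarrow>
     (\<forall>c\<in>set E. s \<le> cweight c \<and> cweight c \<le> l) \<and>
     (\<exists>c\<in>set E. cweight c = s) \<and> (\<exists>c\<in>set E. cweight c = l)"

definition price_of :: "(nat \<Rightarrow> real) \<Rightarrow> customer \<Rightarrow> real" where
  "price_of p c = (\<Sum>i\<in>{cstart c..cend c}. p i)"

definition profit_coup :: "customer list \<Rightarrow> (nat \<Rightarrow> real) \<Rightarrow> real" where
  "profit_coup E p =
     (\<Sum>c\<leftarrow>E. if real_of_int (cweight c) \<ge> price_of p c then max (price_of p c) 0 else 0)"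

definition opt_coup :: "nat \<Rightarrow> customer list \<Rightarrow> real" where
  "opt_coup n E = (SUP p \<in> {p :: nat \<Rightarrow> real. \<forall>i. i \<notin> {1..n} \<longrightarrow> p i = 0}. profit_coup E p)"

definition partial_sum_dist :: "nat \<Rightarrow> int \<Rightarrow> (nat \<Rightarrow> int) pmf" where
  "partial_sum_dist n l = Pi_pmf {0..n} 0 (\<lambda>_. pmf_of_set {0..l})"

definition prices_of_sums :: "nat \<Rightarrow> (nat \<Rightarrow> int) \<Rightarrow> nat \<Rightarrow> real" where
  "prices_of_sums n s i = (if i \<in> {1..n} then real_of_int (s i - s (i - 1)) else 0)"

definition line_random :: "nat \<Rightarrow> int \<Rightarrow> (nat \<Rightarrow> real) pmf" where
  "line_random n l = map_pmf (prices_of_sums n) (partial_sum_dist n l)"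

definition expected_profit_line_random :: "nat \<Rightarrow> customer list \<Rightarrow> int \<Rightarrow> real" where
  "expected_profit_line_random n E l =
     measure_pmf.expectation (line_random n l) (profit_coup E)"

end

theory Submission
  imports Defs
begin

(* Each customer pays at most its valuation, so Opt_coup is at most the total valuation.
   Under Line_Random the price of a customer [a, b] telescopes to s_b - s_(a-1), the difference
   of two independent uniform samples from {0..l}; summing over the (l + 1)^2 equally likely
   pairs shows that a customer of valuation w pays w (w + 1) (3 l + 2 - 2 w) / (6 (l + 1)^2) in
   expectation. The factor (w + 1) (3 l + 2 - 2 w) is concave in w, hence on [s, l] it is at
   least its value at an endpoint, and both endpoint values give w <= K times the expectation,
   with K = 3 / r or K = 6 according to r. *)

definition coupon_revenue :: "real \<Rightarrow> real \<Rightarrow> real" where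
  "coupon_revenue w x = (if x \<le> w then max x 0 else 0)"

lemma coupon_revenue_le: "0 \<le> w \<Longrightarrow> coupon_revenue w x \<le> w"
  by (simp add: coupon_revenue_def)

lemma coupon_revenue_nonpos: "x \<le> 0 \<Longrightarrow> coupon_revenue w x = 0"
  by (simp add: coupon_revenue_def)

lemma profit_coup_eq_sum_coupon_revenue:
  "profit_coup E p = (\<Sum>c\<leftarrow>E. coupon_revenue (of_int (cweight c)) (price_of p c))"
  by (simp add: profit_coup_def coupon_revenue_def)

lemma opt_coup_le_total_valuation:
  assumes "\<forall>c\<in>set E. 0 \<le> cweight c"
  shows "opt_coup n E \<le> (\<Sum>c\<leftarrow>E. of_int (cweight c))"
  unfolding opt_coup_def
proof (rule cSUP_least)
  show "{p :: nat \<Rightarrow> real. \<forall>i. i \<notin> {1..n} \<longrightarrow> p i = 0} \<noteq> {}"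
    by (auto intro: exI[of _ "\<lambda>_. 0"])
next
  fix p
  show "profit_coup E p \<le> (\<Sum>c\<leftarrow>E. of_int (cweight c))"
    unfolding profit_coup_eq_sum_coupon_revenue
    using assms by (intro sum_list_mono coupon_revenue_le) simp
qed

lemma sum_coupon_revenue_atLeastAtMost:
  assumes "0 \<le> w"
  shows "2 * (\<Sum>d\<in>{1..int N}. coupon_revenue (of_int w) (of_int d))
    = (let k = of_int (min (int N) w) in k * (k + 1))"
proof (induction N)
  case 0
  then show ?case using assms by simp
next
  case (Suc N)
  have "{1..int (Suc N)} = insert (int N + 1) {1..int N}" by auto
  then have "(\<Sum>d\<in>{1..int (Suc N)}. coupon_revenue (of_int w) (of_int d))
      = coupon_revenue (of_int w) (of_int N + 1) + (\<Sum>d\<in>{1..int N}. coupon_revenue (of_int w) (of_int d))"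
    by simp
  moreover have "min (int (Suc N)) w = (if int N < w then int N + 1 else min (int N) w)"
    by auto
  ultimately show ?case
    using Suc by (auto simp: coupon_revenue_def Let_def algebra_simps)
qed

lemma sum_coupon_revenue_differences:
  assumes "0 \<le> w"
  shows "6 * (\<Sum>x\<in>{0..int m}. \<Sum>y\<in>{0..int m}. coupon_revenue (of_int w) (of_int (y - x)))
    = (let k = of_int (min (int m) w) in k * (k + 1) * (3 * of_nat m + 2 - 2 * k))"
proof (induction m)
  case 0
  then show ?case using assms by (simp add: coupon_revenue_def)
next
  case (Suc m)
  define M where "M = int m + 1"
  define A where "A = {0..int m}"
  have insert_M: "{0..int (Suc m)} = insert M A" "M \<notin> A"
    unfolding M_def A_def by auto
  have new_row: "(\<Sum>y\<in>insert M A. coupon_revenue (of_int w) (of_int (y - M))) = 0"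
    by (rule sum.neutral) (auto simp: coupon_revenue_nonpos M_def A_def)
  have new_column: "(\<Sum>x\<in>A. coupon_revenue (of_int w) (of_int (M - x)))
      = (\<Sum>d\<in>{1..int (Suc m)}. coupon_revenue (of_int w) (of_int d))"
    unfolding M_def A_def
    by (rule sum.reindex_bij_witness[where i="\<lambda>d. int m + 1 - d" and j="\<lambda>x. int m + 1 - x"]) auto
  have "(\<Sum>x\<in>{0..int (Suc m)}. \<Sum>y\<in>{0..int (Suc m)}. coupon_revenue (of_int w) (of_int (y - x)))
      = (\<Sum>d\<in>{1..int (Suc m)}. coupon_revenue (of_int w) (of_int d))
        + (\<Sum>x\<in>A. \<Sum>y\<in>A. coupon_revenue (of_int w) (of_int (y - x)))"
    unfolding insert_M(1) using insert_M(2) new_row new_column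
    by (simp add: A_def sum.distrib)
  moreover have "min (int (Suc m)) w = (if int m < w then int m + 1 else min (int m) w)"
    by auto
  ultimately show ?case
    using Suc sum_coupon_revenue_atLeastAtMost[OF assms, of "Suc m"]
    by (auto simp: A_def Let_def algebra_simps)
qed

lemma map_pmf_Pi_pmf_pair:
  assumes "finite A" "x \<in> A" "y \<in> A" "x \<noteq> y"
  shows "map_pmf (\<lambda>f. (f x, f y)) (Pi_pmf A d p) = pair_pmf (p x) (p y)"
proof -
  have "map_pmf (\<lambda>f. (f x, f y)) (Pi_pmf A d p) = map_pmf (\<lambda>f. (f x, f y)) (Pi_pmf {x, y} d p)"
    using assms by (subst Pi_pmf_subset[of A "{x, y}"]) (simp_all add: pmf.map_comp o_def)
  also have "Pi_pmf {x, y} d p = map_pmf (\<lambda>(v, f). f(x := v)) (pair_pmf (p x) (Pi_pmf {y} d p))"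
    using assms by (subst Pi_pmf_insert[symmetric]) auto
  also have "map_pmf (\<lambda>f. (f x, f y)) \<dots> = map_pmf (\<lambda>(u, f). (id u, f y)) (pair_pmf (p x) (Pi_pmf {y} d p))"
    using assms by (simp add: pmf.map_comp o_def case_prod_unfold)
  also have "\<dots> = pair_pmf (p x) (p y)"
    by (subst map_pair) (simp add: Pi_pmf_component)
  finally show ?thesis .
qed

lemma pair_pmf_of_set:
  assumes "finite A" "A \<noteq> {}" "finite B" "B \<noteq> {}"
  shows "pair_pmf (pmf_of_set A) (pmf_of_set B) = pmf_of_set (A \<times> B)"
proof (rule pmf_eqI)
  fix z :: "'a \<times> 'b"
  have "finite (A \<times> B)" "A \<times> B \<noteq> {}" using assms by auto
  then show "pmf (pair_pmf (pmf_of_set A) (pmf_of_set B)) z = pmf (pmf_of_set (A \<times> B)) z"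
    using assms by (cases z) (simp add: pmf_pair card_cartesian_product split: split_indicator)
qed

lemma sum_prices_of_sums:
  assumes "1 \<le> a" "a \<le> b" "b \<le> n"
  shows "(\<Sum>i\<in>{a..b}. prices_of_sums n s i) = of_int (s b - s (a - 1))"
  using assms
proof (induction b)
  case 0
  then show ?case by simp
next
  case (Suc b)
  then show ?case
    by (cases "a = Suc b") (simp_all add: prices_of_sums_def)
qed

lemma expectation_sum_list:
  assumes "finite (set_pmf M)"
  shows "measure_pmf.expectation M (\<lambda>x. \<Sum>c\<leftarrow>E. f c x :: real)
    = (\<Sum>c\<leftarrow>E. measure_pmf.expectation M (f c))"
  using assms by (induction E) (simp_all add: Bochner_Integration.integral_add integrable_measure_pmf_finite)

definition line_random_revenue :: "real \<Rightarrow> real \<Rightarrow> real" where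
  "line_random_revenue l w = w * (w + 1) * (3 * l + 2 - 2 * w) / (6 * (l + 1)^2)"

lemma expectation_coupon_revenue_uniform_difference:
  assumes "0 \<le> w" "w \<le> l"
  shows "measure_pmf.expectation (pmf_of_set ({0..l} \<times> {0..l}))
      (\<lambda>(u, v). coupon_revenue (of_int w) (of_int (v - u)))
    = line_random_revenue (of_int l) (of_int w)"
proof -
  obtain m where l: "l = int m"
    using assms by (metis nonneg_int_cases order_trans)
  have "min (int m) w = w"
    using assms l by simp
  then have "(\<Sum>u\<in>{0..l}. \<Sum>v\<in>{0..l}. coupon_revenue (of_int w) (of_int (v - u)))
      = of_int w * (of_int w + 1) * (3 * of_int l + 2 - 2 * of_int w) / 6"
    using sum_coupon_revenue_differences[OF assms(1), of m] l by (simp add: Let_def)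
  moreover have "measure_pmf.expectation (pmf_of_set ({0..l} \<times> {0..l}))
      (\<lambda>(u, v). coupon_revenue (of_int w) (of_int (v - u)))
    = (\<Sum>u\<in>{0..l}. \<Sum>v\<in>{0..l}. coupon_revenue (of_int w) (of_int (v - u))) / (of_int l + 1)^2"
    using assms
    by (simp add: integral_pmf_of_set card_cartesian_product sum.cartesian_product power2_eq_square)
  moreover have "(of_int l + 1 :: real) \<noteq> 0"
    using assms by linarith
  ultimately show ?thesis
    by (simp add: line_random_revenue_def field_simps)
qed

lemma expectation_line_random_coupon_revenue:
  assumes "1 \<le> cstart c" "cstart c \<le> cend c" "cend c \<le> n" "0 \<le> cweight c" "cweight c \<le> l"
  shows "measure_pmf.expectation (line_random n l)
      (\<lambda>p. coupon_revenue (of_int (cweight c)) (price_of p c))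
    = line_random_revenue (of_int l) (of_int (cweight c))"
proof -
  let ?f = "\<lambda>(u, v). coupon_revenue (of_int (cweight c)) (of_int (v - u))"
  let ?ends = "\<lambda>s. (s (cstart c - 1), s (cend c))"
  have price: "price_of (prices_of_sums n s) c = of_int (s (cend c) - s (cstart c - 1))" for s
    using sum_prices_of_sums assms unfolding price_of_def by blast
  have ends: "map_pmf ?ends (partial_sum_dist n l) = pmf_of_set ({0..l} \<times> {0..l})"
    unfolding partial_sum_dist_def using assms
    by (simp add: map_pmf_Pi_pmf_pair pair_pmf_of_set)
  have "measure_pmf.expectation (line_random n l)
      (\<lambda>p. coupon_revenue (of_int (cweight c)) (price_of p c))
    = measure_pmf.expectation (partial_sum_dist n l) (\<lambda>s. ?f (?ends s))"
    unfolding line_random_def by (simp add: price)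
  also have "\<dots> = measure_pmf.expectation (map_pmf ?ends (partial_sum_dist n l)) ?f"
    by simp
  also have "\<dots> = line_random_revenue (of_int l) (of_int (cweight c))"
    unfolding ends using assms by (intro expectation_coupon_revenue_uniform_difference) auto
  finally show ?thesis .
qed

lemma expected_profit_line_random_eq:
  assumes "reduced_instance n E" "\<forall>c\<in>set E. cweight c \<le> l" "0 \<le> l"
  shows "expected_profit_line_random n E l = (\<Sum>c\<leftarrow>E. line_random_revenue (of_int l) (of_int (cweight c)))"
proof -
  have "finite (set_pmf (line_random n l))"
    unfolding line_random_def partial_sum_dist_def using assms(3)
    by (auto simp: set_Pi_pmf intro!: finite_PiE_dflt)
  then have "expected_profit_line_random n E l
      = (\<Sum>c\<leftarrow>E. measure_pmf.expectation (line_random n l)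
          (\<lambda>p. coupon_revenue (of_int (cweight c)) (price_of p c)))"
    unfolding expected_profit_line_random_def profit_coup_eq_sum_coupon_revenue
    by (rule expectation_sum_list)
  also have "\<dots> = (\<Sum>c\<leftarrow>E. line_random_revenue (of_int l) (of_int (cweight c)))"
    using assms unfolding reduced_instance_def
    by (intro arg_cong[where f = sum_list] map_cong refl expectation_line_random_coupon_revenue) auto
  finally show ?thesis .
qed

lemma revenue_factor_ge_right_endpoint:
  fixes w l :: real
  assumes "l \<le> 2 * w" "w \<le> l"
  shows "(l + 1) * (l + 2) \<le> (w + 1) * (3 * l + 2 - 2 * w)"
proof -
  have "0 \<le> (l - w) * (2 * w - l)"
    using assms by simp
  then show ?thesis
    by (simp add: algebra_simps)
qed

lemma revenue_factor_mono:
  fixes s w l :: real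
  assumes "0 \<le> s" "s \<le> w" "2 * w \<le> l"
  shows "(s + 1) * (3 * l + 2 - 2 * s) \<le> (w + 1) * (3 * l + 2 - 2 * w)"
proof -
  have "0 \<le> (w - s) * (3 * l - 2 * w - 2 * s)"
    using assms by simp
  then show ?thesis
    by (simp add: algebra_simps)
qed

lemma revenue_factor_bound_small_ratio:
  fixes s w l :: real
  assumes "0 < s" "2 * s \<le> l" "s \<le> w" "w \<le> l"
  shows "2 * s * (l + 1)^2 \<le> l * ((w + 1) * (3 * l + 2 - 2 * w))"
proof (cases "l \<le> 2 * w")
  case True
  have "2 * s * (l + 1) \<le> l * (l + 2)"
    using assms by (intro mult_mono) auto
  then have "2 * s * (l + 1)^2 \<le> l * ((l + 1) * (l + 2))"
    using mult_left_mono[of "2 * s * (l + 1)" "l * (l + 2)" "l + 1"] assms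
    by (simp add: power2_eq_square algebra_simps)
  also have "\<dots> \<le> l * ((w + 1) * (3 * l + 2 - 2 * w))"
    using revenue_factor_ge_right_endpoint[OF True assms(4)] assms by (intro mult_left_mono) auto
  finally show ?thesis .
next
  case False
  have "s * (l + 1) \<le> l * (s + 1)"
    using assms by (simp add: algebra_simps)
  then have "2 * s * (l + 1)^2 \<le> l * ((s + 1) * (2 * l + 2))"
    using mult_left_mono[of "s * (l + 1)" "l * (s + 1)" "2 * (l + 1)"] assms
    by (simp add: power2_eq_square algebra_simps)
  also have "\<dots> \<le> l * ((s + 1) * (3 * l + 2 - 2 * s))"
    using assms by (intro mult_left_mono) auto
  also have "\<dots> \<le> l * ((w + 1) * (3 * l + 2 - 2 * w))"
    using revenue_factor_mono[of s w l] False assms by (intro mult_left_mono) auto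
  finally show ?thesis .
qed

lemma valuation_le_line_random_revenue:
  fixes s w l :: real
  assumes "0 < s" "s \<le> w" "w \<le> l"
  shows "w \<le> (if s / l \<le> 1/2 then 3 / (s / l) else 6) * line_random_revenue l w"
proof -
  define K where "K = (if s / l \<le> 1/2 then 3 / (s / l) else 6)"
  define g where "g = (w + 1) * (3 * l + 2 - 2 * w)"
  have "6 * (l + 1)^2 \<le> K * g"
  proof (cases "s / l \<le> 1/2")
    case True
    then have "2 * s \<le> l"
      using assms by (simp add: field_simps)
    then have "2 * s * (l + 1)^2 \<le> l * g"
      unfolding g_def by (rule revenue_factor_bound_small_ratio[OF assms(1) _ assms(2,3)])
    then show ?thesis
      using True assms by (simp add: K_def field_simps)
  next
    case False
    then have "l \<le> 2 * w"
      using assms by (simp add: field_simps)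
    then have "(l + 1) * (l + 2) \<le> g"
      using revenue_factor_ge_right_endpoint assms unfolding g_def by simp
    moreover have "(l + 1)^2 \<le> (l + 1) * (l + 2)"
      using assms by (simp add: power2_eq_square)
    ultimately show ?thesis
      using False by (simp add: K_def)
  qed
  then have "w * (6 * (l + 1)^2) \<le> w * (K * g)"
    using assms by (intro mult_left_mono) auto
  moreover have "0 < 6 * (l + 1)^2"
    using assms by simp
  moreover have "K * line_random_revenue l w = w * (K * g) / (6 * (l + 1)^2)"
    by (simp add: line_random_revenue_def g_def)
  ultimately show ?thesis
    unfolding K_def[symmetric] by (simp add: pos_le_divide_eq)
qed

theorem theorem1:
  fixes n :: nat and E :: "customer list" and s l :: int
  assumes "reduced_instance n E"
    and "has_valuation E s l"
    and "s \<ge> 1"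
  defines "r \<equiv> real_of_int s / real_of_int l"
  shows "opt_coup n E \<le> (if r \<le> 1/2 then 3 / r else 6) * expected_profit_line_random n E l"
proof -
  define K where "K = (if r \<le> 1/2 then 3 / r else 6)"
  have weights: "\<forall>c\<in>set E. 0 < cweight c \<and> s \<le> cweight c \<and> cweight c \<le> l"
    using assms(1,2) unfolding reduced_instance_def has_valuation_def by blast
  have "0 \<le> l"
    using assms(2,3) unfolding has_valuation_def by force
  have "opt_coup n E \<le> (\<Sum>c\<leftarrow>E. of_int (cweight c))"
    using weights by (intro opt_coup_le_total_valuation) auto
  also have "\<dots> \<le> (\<Sum>c\<leftarrow>E. K * line_random_revenue (of_int l) (of_int (cweight c)))"
    using weights assms(3) unfolding K_def r_def
    by (intro sum_list_mono valuation_le_line_random_revenue) auto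
  also have "\<dots> = K * expected_profit_line_random n E l"
    using weights \<open>0 \<le> l\<close> assms(1) by (simp add: sum_list_const_mult expected_profit_line_random_eq)
  finally show ?thesis
    unfolding K_def .
qed

end
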